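(* Let $p\ge1$ and $1\le m\le p$, and let $u\in M_r^{(1)}$ satisfy $v(-t,m)u=0$ for all $1\le t\le p$ with $t\ne m$, and $v(-m,m)u=\alpha m u$ for some $\alpha\in\mathbb C$. Then $$v(m,m)(\det\mathbf V_p)u=2m^2(2\alpha+r-p+1)\det(\mathbf V_p^{(m)})u+(\det\mathbf V_p)v(m,m)u,$$ where $\mathbf V_p^{(m)}$ is the matrix obtained from $\mathbf V_p$ by deleting its $m$-th row and $m$-th column (with determinant $1$ when $p=1$).
   Context: Fix an integer $d\ge 2$ and $r\in\mathbb{C}$. Let $\hat{\mathfrak h}$ be the complex Lie algebra with basis $\{v^i(m)\mid 1\le i\le d,\ m\in\mathbb{Z}\}\cup\{\mathbf c\}$ and bracket $[v^i(m),v^j(n)]=\delta_{m+n,0}\delta_{i,j}\,m\,\mathbf c$, $[\mathbf c,\hat{\mathfrak h}]=0$. In $A=U(\hat{\mathfrak h})/\langle \mathbf c-1\rangle$ let $v^{ij}(m,n)$ be the image of $v^i(m)v^j(n)$; then $v^{ij}(m,n)=v^{ji}(n,m)$ unless $i=j$ and $m=-n$, and $v^{ii}(m,-m)=v^{ii}(-m,m)+m$. Let $\mathcal B=\{v^{ii}(m,n)\mid 1\le i\le d,\ m\le n\}\cup\{v^{ij}(m,n)\mid 1\le i<j\le d,\ m,n\in\mathbb Z\}$; then $\mathcal B\cup\{1\}$ is linearly independent, $\mathcal L:=\mathrm{span}_{\mathbb C}\mathcal B\oplus\mathbb C\subset A$ contains every $v^{ij}(m,n)$ and is closed under $[x,y]=xy-yx$.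 With $\pi_1,\pi_2$ the projections of $\mathcal L$ onto $\mathrm{span}\,\mathcal B$ and onto $\mathbb C$, $[x,y]_r=\pi_1([x,y])+r\pi_2([x,y])$ is a Lie bracket on $\mathcal L$; call this Lie algebra $\mathcal L_r$. Let $\mathcal B_+=\{v^{ij}(m,n)\in\mathcal B\mid m\ge 0\text{ or }n\ge 0\}$, $\mathcal L_r^+=\mathrm{span}\,\mathcal B_+\oplus\mathbb C$, and $M_r=U(\mathcal L_r)\otimes_{U(\mathcal L_r^+)}\mathbb C\mathbf 1$, where $\mathcal B_+$ acts by $0$ on $\mathbf 1$ and $s\in\mathbb C\subset\mathcal L_r$ acts by the scalar $s$. Let $\mathcal L_r^{(1)}$ be the Lie subalgebra of $\mathcal L_r$ generated by $\{v^{11}(m,n)\mid m,n\in\mathbb Z,\ m\le n\}$ and $M_r^{(1)}=U(\mathcal L_r^{(1)})\mathbf 1\subset M_r$. Write $v(m,n)=v^{11}(m,n)$. The elements $v(-s,-t)$ with $s,t>0$ pairwise commute in $U(\mathcal L_r)$, so determinants of matrices with such entries are well defined; $\mathbf V_p=(v(-s,-t))_{1\le s,t\le p}$ and $\det\mathbf V_p=\sum_{\sigma\in\mathfrak S_p}\mathrm{sgn}(\sigma)\prod_{q=1}^p v(-q,-\sigma(q))$. *)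

theory Defs
  imports Complex_Main "HOL-Combinatorics.Permutations"
begin

(* Generators of U(L_r): Some (i,j,m,n) stands for v^{ij}(m,n) (only those in the
   basis B are used), None stands for the element 1 of the summand C of L_r. *)
type_synonym gen = "(nat \<times> nat \<times> int \<times> int) option"
(* elements of L (finitely supported coefficient functions on generators) *)
type_synonym lelt = "gen \<Rightarrow> complex"
(* elements of the free associative algebra on the generators (noncommutative polynomials) *)
type_synonym felt = "gen list \<Rightarrow> complex"

(* g is a basis element of L_r, i.e. g \<in> B or g is the constant 1 *)
definition isgen :: "nat \<Rightarrow> gen \<Rightarrow> bool" where
  "isgen d g = (case g of None \<Rightarrow> True
     | Some (i,j,m,n) \<Rightarrow> 1 \<le> i \<and> i \<le> d \<and> 1 \<le> j \<and> j \<le> d \<and> (i < j \<or> (i = j \<and> m \<le> n)))"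

definition isBplus :: "nat \<Rightarrow> gen \<Rightarrow> bool" where
  "isBplus d g = (case g of None \<Rightarrow> False
     | Some (i,j,m,n) \<Rightarrow> isgen d g \<and> (0 \<le> m \<or> 0 \<le> n))"

definition single :: "gen \<Rightarrow> lelt" where
  "single g = (\<lambda>x. if x = g then 1 else 0)"

(* the element v^{ij}(m,n) of L expressed in the basis B \<union> {1}, using
   v^{ij}(m,n) = v^{ji}(n,m) unless i=j and m=-n, and v^{ii}(m,-m) = v^{ii}(-m,m) + m *)
definition vel :: "nat \<Rightarrow> nat \<Rightarrow> int \<Rightarrow> int \<Rightarrow> lelt" where
  "vel i j m n =
     (if i < j then single (Some (i,j,m,n))
      else if j < i then single (Some (j,i,n,m))
      else if m \<le> n then single (Some (i,i,m,n))
      else (\<lambda>x. single (Some (i,i,n,m)) x + (if m = - n then of_int m else 0) * single None x))"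

(* the scalar [v^i(m), v^j(n)] = \<delta>_{ij} \<delta>_{m+n,0} m  (with c = 1) *)
definition hpair :: "nat \<times> int \<Rightarrow> nat \<times> int \<Rightarrow> complex" where
  "hpair a b = (if fst a = fst b \<and> snd a + snd b = 0 then of_int (snd a) else 0)"

(* commutator in A of basis elements:
   [ab,cd] = [b,c] ad + [b,d] ac + [a,c] db + [a,d] cb  with a=v^i(m), b=v^j(n), c=v^k(p), d=v^l(q) *)
definition commA :: "gen \<Rightarrow> gen \<Rightarrow> lelt" where
  "commA g h = (case (g, h) of
      (Some (i,j,m,n), Some (k,l,p,q)) \<Rightarrow>
        (\<lambda>x. hpair (j,n) (k,p) * vel i l m q x + hpair (j,n) (l,q) * vel i k m p x
            + hpair (i,m) (k,p) * vel l j q n x + hpair (i,m) (l,q) * vel k j p n x)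
    | _ \<Rightarrow> (\<lambda>x. 0))"

(* the bracket [x,y]_r = \<pi>_1([x,y]) + r \<pi>_2([x,y]) *)
definition brr :: "complex \<Rightarrow> gen \<Rightarrow> gen \<Rightarrow> lelt" where
  "brr r g h = (let f = commA g h in f(None := r * f None))"

definition wd :: "gen list \<Rightarrow> felt" where
  "wd w = (\<lambda>x. if x = w then 1 else 0)"

definition liftL :: "lelt \<Rightarrow> felt" where
  "liftL l = (\<lambda>x. case x of [g] \<Rightarrow> l g | _ \<Rightarrow> 0)"

definition fmul :: "felt \<Rightarrow> felt \<Rightarrow> felt" where
  "fmul f g = (\<lambda>x. \<Sum>i\<le>length x. f (take i x) * g (drop i x))"

(* Kernel of the surjection  F \<rightarrow> M_r,  f \<mapsto> f \<cdot> 1:  the sum of the two-sided ideal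
   defining U(L_r) and the left ideal generated by B_+ and by (s - s\<cdot>1) for s \<in> C \<subseteq> L_r *)
inductive_set Jr :: "nat \<Rightarrow> complex \<Rightarrow> felt set" for d :: nat and r :: complex where
  J_zero: "(\<lambda>_. 0) \<in> Jr d r"
| J_add: "f \<in> Jr d r \<Longrightarrow> g \<in> Jr d r \<Longrightarrow> (\<lambda>x. f x + g x) \<in> Jr d r"
| J_smult: "f \<in> Jr d r \<Longrightarrow> (\<lambda>x. c * f x) \<in> Jr d r"
| J_comm: "isgen d x \<Longrightarrow> isgen d y \<Longrightarrow> \<forall>g\<in>set u. isgen d g \<Longrightarrow> \<forall>g\<in>set w. isgen d g \<Longrightarrow>
     (\<lambda>z. wd (u @ [x, y] @ w) z - wd (u @ [y, x] @ w) z
          - fmul (wd u) (fmul (liftL (brr r x y)) (wd w)) z) \<in> Jr d r"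
| J_pos: "isBplus d x \<Longrightarrow> \<forall>g\<in>set u. isgen d g \<Longrightarrow> wd (u @ [x]) \<in> Jr d r"
| J_const: "\<forall>g\<in>set u. isgen d g \<Longrightarrow> (\<lambda>z. wd (u @ [None]) z - wd u z) \<in> Jr d r"

(* equality of f\<cdot>1 and g\<cdot>1 in M_r *)
definition eqM :: "nat \<Rightarrow> complex \<Rightarrow> felt \<Rightarrow> felt \<Rightarrow> bool" where
  "eqM d r f g \<longleftrightarrow> (\<lambda>x. f x - g x) \<in> Jr d r"

(* representatives of elements of U(L_r^{(1)}): polynomials in the v^{11}(m,n), m \<le> n *)
definition A1 :: "felt set" where
  "A1 = {f. finite {x. f x \<noteq> 0} \<and>
            (\<forall>x. f x \<noteq> 0 \<longrightarrow> (\<forall>g\<in>set x. \<exists>m n. m \<le> n \<and> g = Some (1, 1, m, n)))}"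

(* v(m,n) = v^{11}(m,n) as element of U(L_r) *)
definition vF :: "int \<Rightarrow> int \<Rightarrow> felt" where
  "vF m n = liftL (vel 1 1 m n)"

definition prodF :: "felt list \<Rightarrow> felt" where
  "prodF xs = foldr fmul xs (wd [])"

(* det of the matrix (v(-s,-t))_{s,t \<in> S}, rows/columns ordered increasingly:
   \<Sum>_\<sigma> sgn \<sigma> \<Prod>_{q \<in> S, increasing} v(-q,-\<sigma> q) *)
definition detS :: "nat set \<Rightarrow> felt" where
  "detS S = (\<lambda>x. \<Sum>\<sigma>\<in>{\<sigma>. \<sigma> permutes S}.
      of_int (sign \<sigma>) * prodF (map (\<lambda>q. vF (- int q) (- int (\<sigma> q))) (sorted_list_of_set S)) x)"

end

theory Submission
  imports Defs
begin

text \<open>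
  All entries \<open>v(-s,-t)\<close> (\<open>s, t \<ge> 1\<close>) of \<open>V\<^sub>p\<close> commute with each other, and \<open>v(m,m)\<close> and
  \<open>v(-k,m)\<close> commute with those having \<open>m \<notin> {s,t}\<close>. So \<open>v(m,m)\<close> passes through the monomial of
  \<open>\<sigma>\<close> in \<open>det V\<^sub>p\<close> except at the factors in row or column \<open>m\<close>, and every \<open>v(-k,m)\<close> this creates
  can be moved to the right, where it kills \<open>u\<close> for \<open>k \<noteq> m\<close> and acts by \<open>\<alpha> m\<close> for \<open>k = m\<close>.
  If \<open>\<sigma>\<close> fixes \<open>m\<close>, the factor \<open>v(-m,-m)\<close> contributes
  \<open>[v(m,m), v(-m,-m)] = 4m v(-m,m) + 2m\<^sup>2 r\<close>, i.e. \<open>2m\<^sup>2(2\<alpha> + r)\<close> times the monomial of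
  \<open>\<sigma>\<close> restricted to the complement of \<open>m\<close>. If \<open>\<sigma>\<close> moves \<open>m\<close>, the factors \<open>v(-m,-\<sigma> m)\<close> and
  \<open>v(-\<sigma>\<inverse> m,-m)\<close> contribute \<open>2m\<^sup>2\<close> times the monomial of \<open>\<sigma> \<circ> (\<sigma>\<inverse> m m)\<close>, a permutation of
  the complement of opposite sign; each such permutation arises from exactly \<open>p - 1\<close>
  permutations \<open>\<sigma>\<close>, whence the coefficient \<open>2m\<^sup>2(2\<alpha> + r) - 2m\<^sup>2(p - 1)\<close>.
\<close>

section \<open>The free algebra on the generators\<close>

lemma fmul_assoc: "fmul (fmul f g) h = fmul f (fmul g h)"
proof
  fix x :: "gen list"
  define n where "n = length x"
  define G where "G = (\<lambda>j l. f (take j x) * g (take l (drop j x)) * h (drop (j + l) x))"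
  have "fmul (fmul f g) h x = (\<Sum>k\<le>n. \<Sum>j\<le>k. G j (k - j))"
    unfolding fmul_def n_def[symmetric]
    by (auto simp: sum_distrib_right G_def drop_take n_def intro!: sum.cong)
  also have "\<dots> = (\<Sum>(j, l)\<in>{(j, l). j + l \<le> n}. G j l)"
    by (rule sum.triangle_reindex_eq[symmetric])
  also have "\<dots> = (\<Sum>j\<le>n. \<Sum>l\<le>n - j. G j l)"
  proof -
    have "{(j, l). j + l \<le> n} = Sigma {..n} (\<lambda>j. {..n - j})" by auto
    then show ?thesis by (simp add: sum.Sigma)
  qed
  also have "\<dots> = fmul f (fmul g h) x"
    unfolding fmul_def n_def
    by (auto simp: sum_distrib_left G_def mult.assoc add.commute intro!: sum.cong)
  finally show "fmul (fmul f g) h x = fmul f (fmul g h) x" .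
qed

lemma fmul_wd_left_eq:
  "fmul (wd u) g = (\<lambda>x. if take (length u) x = u then g (drop (length u) x) else 0)"
proof
  fix x
  have "fmul (wd u) g x = (\<Sum>i\<le>length x. if i = length u then
          (if take (length u) x = u then g (drop (length u) x) else 0) else 0)"
    unfolding fmul_def wd_def by (rule sum.cong) (auto simp: min_absorb2)
  also have "\<dots> = (if take (length u) x = u then g (drop (length u) x) else 0)"
    by (auto simp: min_def dest: arg_cong[where f=length])
  finally show "fmul (wd u) g x = (if take (length u) x = u then g (drop (length u) x) else 0)" .
qed

lemma fmul_wd_wd: "fmul (wd u) (wd v) = wd (u @ v)"
  unfolding fmul_wd_left_eq by (auto simp: wd_def fun_eq_iff) (metis append_take_drop_id)

lemma fmul_wd_fmul_wd: "fmul (wd u) (fmul (wd v) g) = fmul (wd (u @ v)) g"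
  by (simp add: fmul_assoc[symmetric] fmul_wd_wd)

lemma fmul_add_right: "fmul f (\<lambda>x. g x + h x) = (\<lambda>x. fmul f g x + fmul f h x)"
  by (simp add: fmul_def fun_eq_iff distrib_left sum.distrib)
lemma fmul_diff_right: "fmul f (\<lambda>x. g x - h x) = (\<lambda>x. fmul f g x - fmul f h x)"
  by (simp add: fmul_def fun_eq_iff right_diff_distrib sum_subtractf)
lemma fmul_smult_right: "fmul f (\<lambda>x. c * g x) = (\<lambda>x. c * fmul f g x)"
  by (simp add: fmul_def fun_eq_iff sum_distrib_left mult_ac)
lemma fmul_zero_right: "fmul f (\<lambda>x. 0) = (\<lambda>x. 0)"
  by (simp add: fmul_def fun_eq_iff)
lemma fmul_add_left: "fmul (\<lambda>x. g x + h x) f = (\<lambda>x. fmul g f x + fmul h f x)"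
  by (simp add: fmul_def fun_eq_iff distrib_right sum.distrib)
lemma fmul_diff_left: "fmul (\<lambda>x. g x - h x) f = (\<lambda>x. fmul g f x - fmul h f x)"
  by (simp add: fmul_def fun_eq_iff left_diff_distrib sum_subtractf)
lemma fmul_smult_left: "fmul (\<lambda>x. c * g x) f = (\<lambda>x. c * fmul g f x)"
  by (simp add: fmul_def fun_eq_iff sum_distrib_left mult_ac)
lemma fmul_zero_left: "fmul (\<lambda>x. 0) f = (\<lambda>x. 0)"
  by (simp add: fmul_def fun_eq_iff)
lemma fmul_sum_left:
  "fmul (\<lambda>x. \<Sum>i\<in>I. c i * g i x) f = (\<lambda>x. \<Sum>i\<in>I. c i * fmul (g i) f x)"
  by (simp add: fmul_def fun_eq_iff sum_distrib_left sum_distrib_right mult_ac sum.swap[where A=I])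
lemma fmul_sum_right:
  "fmul f (\<lambda>x. \<Sum>i\<in>I. c i * g i x) = (\<lambda>x. \<Sum>i\<in>I. c i * fmul f (g i) x)"
  by (simp add: fmul_def fun_eq_iff sum_distrib_left sum_distrib_right mult_ac sum.swap[where A=I])

lemma liftL_single: "liftL (single g) = wd [g]"
  by (auto simp: liftL_def single_def wd_def fun_eq_iff split: list.split)
lemma liftL_add: "liftL (\<lambda>x. f x + g x) = (\<lambda>x. liftL f x + liftL g x)"
  by (auto simp: liftL_def fun_eq_iff split: list.split)
lemma liftL_smult: "liftL (\<lambda>x. c * f x) = (\<lambda>x. c * liftL f x)"
  by (auto simp: liftL_def fun_eq_iff split: list.split)
lemma liftL_zero: "liftL (\<lambda>x. 0) = (\<lambda>x. 0)"
  by (auto simp: liftL_def fun_eq_iff split: list.split)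

section \<open>Computing in \<open>M\<^sub>r\<close> modulo the kernel\<close>

definition gen_poly :: "nat \<Rightarrow> felt \<Rightarrow> bool" where
  "gen_poly d a \<longleftrightarrow> finite {x. a x \<noteq> 0} \<and> (\<forall>x. a x \<noteq> 0 \<longrightarrow> (\<forall>g\<in>set x. isgen d g))"

lemma felt_expansion: "finite {x. a x \<noteq> 0} \<Longrightarrow> a = (\<lambda>z. \<Sum>v\<in>{x. a x \<noteq> 0}. a v * wd v z)"
proof
  fix z assume fin: "finite {x. a x \<noteq> 0}"
  have "(\<Sum>v\<in>{x. a x \<noteq> 0}. a v * wd v z) = (\<Sum>v\<in>{x. a x \<noteq> 0}. if v = z then a z else 0)"
    by (rule sum.cong) (auto simp: wd_def)
  also have "\<dots> = a z" using fin by (simp add: sum.delta')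
  finally show "a z = (\<Sum>v\<in>{x. a x \<noteq> 0}. a v * wd v z)" by simp
qed

lemma brr_None_left: "brr r None y = (\<lambda>_. 0)"
  by (simp add: brr_def commA_def fun_eq_iff)

context
  fixes d :: nat and r :: complex
begin

lemma Jr_sum:
  "finite I \<Longrightarrow> (\<And>i. i \<in> I \<Longrightarrow> j i \<in> Jr d r) \<Longrightarrow> (\<lambda>x. \<Sum>i\<in>I. c i * j i x) \<in> Jr d r"
proof (induction I rule: finite_induct)
  case empty
  then show ?case by (simp add: J_zero)
next
  case (insert i I)
  have "(\<lambda>x. c i * j i x + (\<Sum>i\<in>I. c i * j i x)) \<in> Jr d r"
    using insert by (intro J_add J_smult) auto
  then show ?case using insert by simp
qed

lemma eqM_refl: "eqM d r f f"
  unfolding eqM_def using J_zero by simp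

lemma eqM_trans [trans]: "eqM d r f g \<Longrightarrow> eqM d r g h \<Longrightarrow> eqM d r f h"
  unfolding eqM_def by (drule (1) J_add) simp

lemma eqM_add:
  "eqM d r f1 g1 \<Longrightarrow> eqM d r f2 g2 \<Longrightarrow> eqM d r (\<lambda>x. f1 x + f2 x) (\<lambda>x. g1 x + g2 x)"
  unfolding eqM_def by (drule (1) J_add) (simp add: algebra_simps)

lemma eqM_smult: "eqM d r f g \<Longrightarrow> eqM d r (\<lambda>x. c * f x) (\<lambda>x. c * g x)"
  unfolding eqM_def by (drule J_smult[where c=c]) (simp add: algebra_simps)

lemma eqM_sum:
  assumes "finite I" "\<And>i. i \<in> I \<Longrightarrow> eqM d r (f i) (g i)"
  shows "eqM d r (\<lambda>x. \<Sum>i\<in>I. c i * f i x) (\<lambda>x. \<Sum>i\<in>I. c i * g i x)"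
proof -
  have "(\<lambda>x. \<Sum>i\<in>I. c i * (f i x - g i x)) \<in> Jr d r"
    using assms unfolding eqM_def by (intro Jr_sum) auto
  then show ?thesis
    unfolding eqM_def by (simp add: right_diff_distrib sum_subtractf)
qed

lemma Jr_fmul_wd_left: "j \<in> Jr d r \<Longrightarrow> \<forall>g\<in>set v. isgen d g \<Longrightarrow> fmul (wd v) j \<in> Jr d r"
proof (induction rule: Jr.induct)
  case J_zero
  then show ?case by (simp add: fmul_zero_right Jr.J_zero)
next
  case (J_add f g)
  then show ?case by (simp add: fmul_add_right Jr.J_add)
next
  case (J_smult f c)
  then show ?case by (simp add: fmul_smult_right Jr.J_smult)
next
  case (J_comm x y u w)
  then show ?case
    using Jr.J_comm[where d=d and r=r and u="v @ u" and w=w and x=x and y=y]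
    by (auto simp: fmul_diff_right fmul_wd_wd fmul_wd_fmul_wd)
next
  case (J_pos x u)
  then show ?case using Jr.J_pos[where d=d and r=r and u="v @ u" and x=x] by (auto simp: fmul_wd_wd)
next
  case (J_const u)
  then show ?case
    using Jr.J_const[where d=d and r=r and u="v @ u"] by (auto simp: fmul_wd_wd fmul_diff_right)
qed

lemma eqM_fmul_wd_left:
  "eqM d r f g \<Longrightarrow> \<forall>x\<in>set v. isgen d x \<Longrightarrow> eqM d r (fmul (wd v) f) (fmul (wd v) g)"
  using Jr_fmul_wd_left[of "\<lambda>x. f x - g x" v] unfolding eqM_def by (simp add: fmul_diff_right)

lemma Jr_fmul_right:
  assumes "gen_poly d a" and "\<And>v. \<forall>g\<in>set v. isgen d g \<Longrightarrow> fmul E (wd v) \<in> Jr d r"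
  shows "fmul E a \<in> Jr d r"
proof -
  have fin: "finite {x. a x \<noteq> 0}" using assms(1) unfolding gen_poly_def by blast
  have "fmul E a = (\<lambda>z. \<Sum>v\<in>{x. a x \<noteq> 0}. a v * fmul E (wd v) z)"
    by (subst felt_expansion[OF fin]) (rule fmul_sum_right)
  moreover have "(\<lambda>z. \<Sum>v\<in>{x. a x \<noteq> 0}. a v * fmul E (wd v) z) \<in> Jr d r"
    using assms unfolding gen_poly_def by (intro Jr_sum[OF fin]) auto
  ultimately show ?thesis by simp
qed

lemma eqM_swap:
  assumes "gen_poly d a" "isgen d x" "isgen d y" "\<forall>g\<in>set u. isgen d g" "\<forall>g\<in>set w. isgen d g"
  shows "eqM d r (fmul (wd (u @ [x, y] @ w)) a)
     (\<lambda>z. fmul (wd (u @ [y, x] @ w)) a z + fmul (fmul (wd u) (fmul (liftL (brr r x y)) (wd w))) a z)"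
proof -
  define E where "E = (\<lambda>z. wd (u @ [x, y] @ w) z - wd (u @ [y, x] @ w) z
                          - fmul (wd u) (fmul (liftL (brr r x y)) (wd w)) z)"
  have "fmul E a \<in> Jr d r"
  proof (rule Jr_fmul_right[OF assms(1)])
    fix v :: "gen list" assume "\<forall>g\<in>set v. isgen d g"
    then have "(\<lambda>z. wd (u @ [x, y] @ (w @ v)) z - wd (u @ [y, x] @ (w @ v)) z
                  - fmul (wd u) (fmul (liftL (brr r x y)) (wd (w @ v))) z) \<in> Jr d r"
      using assms by (intro Jr.J_comm) auto
    then show "fmul E (wd v) \<in> Jr d r"
      unfolding E_def by (simp add: fmul_diff_left fmul_wd_wd fmul_assoc)
  qed
  then show ?thesis unfolding eqM_def E_def by (simp add: fmul_diff_left fmul_add_left diff_diff_eq)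
qed

lemma Jr_drop_None:
  "\<forall>g\<in>set u. isgen d g \<Longrightarrow> \<forall>g\<in>set v. isgen d g \<Longrightarrow>
     (\<lambda>z. wd (u @ [None] @ v) z - wd (u @ v) z) \<in> Jr d r"
proof (induction v arbitrary: u)
  case Nil
  then show ?case using J_const by simp
next
  case (Cons y v)
  have swap: "(\<lambda>z. wd (u @ [None, y] @ v) z - wd (u @ [y, None] @ v) z
          - fmul (wd u) (fmul (liftL (brr r None y)) (wd v)) z) \<in> Jr d r"
    using Cons by (intro Jr.J_comm) (auto simp: isgen_def)
  have "(\<lambda>z. wd ((u @ [y]) @ [None] @ v) z - wd ((u @ [y]) @ v) z) \<in> Jr d r"
    using Cons.prems by (intro Cons.IH) auto
  from J_add[OF swap this] show ?case
    by (simp add: brr_None_left liftL_zero fmul_zero_left fmul_zero_right)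
qed

lemma eqM_drop_None:
  assumes "gen_poly d a" "\<forall>g\<in>set u. isgen d g" "\<forall>g\<in>set w. isgen d g"
  shows "eqM d r (fmul (wd (u @ [None] @ w)) a) (fmul (wd (u @ w)) a)"
proof -
  have "fmul (\<lambda>z. wd (u @ [None] @ w) z - wd (u @ w) z) a \<in> Jr d r"
  proof (rule Jr_fmul_right[OF assms(1)])
    fix v :: "gen list" assume "\<forall>g\<in>set v. isgen d g"
    then have "(\<lambda>z. wd (u @ [None] @ (w @ v)) z - wd (u @ (w @ v)) z) \<in> Jr d r"
      using assms by (intro Jr_drop_None) auto
    then show "fmul (\<lambda>z. wd (u @ [None] @ w) z - wd (u @ w) z) (wd v) \<in> Jr d r"
      by (simp add: fmul_diff_left fmul_wd_wd)
  qed
  then show ?thesis unfolding eqM_def by (simp add: fmul_diff_left)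
qed

end

section \<open>The generators \<open>v(-s,-t)\<close>, \<open>v(-k,m)\<close>, \<open>v(m,m)\<close>\<close>

(* v(-s,-t), v(-k,m) and v(m,m) for v = v^{11}; as v(-s,-t) = v(-t,-s), the basis element
   stores the smaller argument first. *)
definition vneg :: "nat \<Rightarrow> nat \<Rightarrow> gen" where
  "vneg s t = Some (1, 1, - int (max s t), - int (min s t))"
definition vmix :: "nat \<Rightarrow> nat \<Rightarrow> gen" where
  "vmix k m = Some (1, 1, - int k, int m)"
definition vpos :: "nat \<Rightarrow> gen" where
  "vpos m = Some (1, 1, int m, int m)"

definition negs :: "nat set \<Rightarrow> gen set" where
  "negs A = {vneg s t | s t. s \<in> A \<and> t \<in> A}"

lemma negs_mono: "A \<subseteq> B \<Longrightarrow> negs A \<subseteq> negs B"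
  unfolding negs_def by blast

lemma vneg_commute: "vneg s t = vneg t s"
  by (simp add: vneg_def max.commute min.commute)

lemma isgen_vneg: "d \<ge> 1 \<Longrightarrow> isgen d (vneg s t)"
  by (simp add: isgen_def vneg_def)
lemma isgen_vmix: "d \<ge> 1 \<Longrightarrow> isgen d (vmix k m)"
  by (simp add: isgen_def vmix_def)
lemma isgen_vpos: "d \<ge> 1 \<Longrightarrow> isgen d (vpos m)"
  by (simp add: isgen_def vpos_def)

lemma brr_vneg_vneg:
  "s \<ge> 1 \<Longrightarrow> t \<ge> 1 \<Longrightarrow> s' \<ge> 1 \<Longrightarrow> t' \<ge> 1 \<Longrightarrow> brr r (vneg s t) (vneg s' t') = (\<lambda>_. 0)"
  by (auto simp: brr_def commA_def hpair_def vneg_def fun_eq_iff)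

lemma brr_vpos_vneg: "s \<noteq> m \<Longrightarrow> t \<noteq> m \<Longrightarrow> brr r (vpos m) (vneg s t) = (\<lambda>_. 0)"
  by (auto simp: brr_def commA_def hpair_def vneg_def vpos_def fun_eq_iff max_def min_def)

lemma brr_vmix_vneg:
  "k \<ge> 1 \<Longrightarrow> s \<ge> 1 \<Longrightarrow> t \<ge> 1 \<Longrightarrow> s \<noteq> m \<Longrightarrow> t \<noteq> m \<Longrightarrow> brr r (vmix k m) (vneg s t) = (\<lambda>_. 0)"
  by (auto simp: brr_def commA_def hpair_def vneg_def vmix_def fun_eq_iff max_def min_def)

lemma brr_vpos_vneg_diag: "m \<ge> 1 \<Longrightarrow> brr r (vpos m) (vneg m m) =
   (\<lambda>x. (4 * of_nat m) * single (vmix m m) x + (2 * r * of_nat m ^ 2) * single None x)"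
  by (auto simp: brr_def commA_def hpair_def vneg_def vpos_def vmix_def vel_def single_def
      fun_eq_iff power2_eq_square)

lemma brr_vpos_vneg_offdiag: "m \<ge> 1 \<Longrightarrow> b \<ge> 1 \<Longrightarrow> b \<noteq> m \<Longrightarrow>
   brr r (vpos m) (vneg m b) = (\<lambda>x. (2 * of_nat m) * single (vmix b m) x)"
  by (auto simp: brr_def commA_def hpair_def vneg_def vpos_def vmix_def vel_def single_def
      fun_eq_iff max_def min_def)

lemma brr_vmix_vneg_offdiag: "m \<ge> 1 \<Longrightarrow> b \<ge> 1 \<Longrightarrow> a \<ge> 1 \<Longrightarrow> b \<noteq> m \<Longrightarrow> a \<noteq> m \<Longrightarrow>
   brr r (vmix b m) (vneg a m) = (\<lambda>x. of_nat m * single (vneg a b) x)"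
  by (auto simp: brr_def commA_def hpair_def vneg_def vmix_def vel_def single_def
      fun_eq_iff max_def min_def)

lemma isgen_negs: "d \<ge> 1 \<Longrightarrow> g \<in> negs A \<Longrightarrow> isgen d g"
  by (auto simp: negs_def isgen_vneg)

lemma brr_negs: "0 \<notin> A \<Longrightarrow> g \<in> negs A \<Longrightarrow> h \<in> negs A \<Longrightarrow> brr r g h = (\<lambda>_. 0)"
  by (auto simp: negs_def intro!: brr_vneg_vneg; metis Suc_leI gr0I)

abbreviation act :: "felt \<Rightarrow> gen list \<Rightarrow> felt" where "act a w \<equiv> fmul (wd w) a"

context
  fixes d :: nat and r :: complex and a :: felt
  assumes gen_poly: "gen_poly d a"
begin

lemma act_swap_commuting:
  assumes "isgen d x" "isgen d y" "\<forall>g\<in>set u. isgen d g" "\<forall>g\<in>set w. isgen d g"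
    and "brr r x y = (\<lambda>_. 0)"
  shows "eqM d r (act a (u @ [x, y] @ w)) (act a (u @ [y, x] @ w))"
  using eqM_swap[OF gen_poly assms(1-4), of r] assms(5)
  by (simp add: liftL_zero fmul_zero_left fmul_zero_right)

lemma act_swap_single:
  assumes "isgen d x" "isgen d y" "\<forall>g\<in>set u. isgen d g" "\<forall>g\<in>set w. isgen d g"
    and "brr r x y = (\<lambda>z. c * single g z)"
  shows "eqM d r (act a (u @ [x, y] @ w)) (\<lambda>z. act a (u @ [y, x] @ w) z + c * act a (u @ [g] @ w) z)"
  using eqM_swap[OF gen_poly assms(1-4), of r] assms(5)
  by (simp add: liftL_smult liftL_single fmul_smult_left fmul_smult_right fmul_wd_wd)

lemma act_swap_pair:
  assumes "isgen d x" "isgen d y" "\<forall>g\<in>set u. isgen d g" "\<forall>g\<in>set w. isgen d g"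
    and "brr r x y = (\<lambda>z. c1 * single g1 z + c2 * single g2 z)"
  shows "eqM d r (act a (u @ [x, y] @ w))
    (\<lambda>z. act a (u @ [y, x] @ w) z + (c1 * act a (u @ [g1] @ w) z + c2 * act a (u @ [g2] @ w) z))"
  using eqM_swap[OF gen_poly assms(1-4), of r] assms(5)
  by (simp add: liftL_add liftL_smult liftL_single fmul_smult_left fmul_smult_right
      fmul_add_left fmul_add_right fmul_wd_wd)

lemma act_move_right:
  assumes "isgen d x" "\<forall>y\<in>set R. isgen d y \<and> brr r x y = (\<lambda>_. 0)"
    and "\<forall>g\<in>set u. isgen d g" "\<forall>g\<in>set w. isgen d g"
  shows "eqM d r (act a (u @ [x] @ R @ w)) (act a (u @ R @ [x] @ w))"
  using assms(2,3)
proof (induction R arbitrary: u)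
  case Nil
  then show ?case by (simp add: eqM_refl)
next
  case (Cons y R)
  have "eqM d r (act a (u @ [x, y] @ (R @ w))) (act a (u @ [y, x] @ (R @ w)))"
    using Cons.prems assms by (intro act_swap_commuting) auto
  also have "eqM d r \<dots> (act a ((u @ [y]) @ R @ [x] @ w))"
    using Cons.prems by simp (intro Cons.IH[of "u @ [y]", simplified]; auto)
  finally show ?case by simp
qed

lemma act_reorder:
  assumes G: "\<forall>g\<in>G. isgen d g" "\<forall>g\<in>G. \<forall>h\<in>G. brr r g h = (\<lambda>_. 0)"
    and "set R \<subseteq> G" "mset R = mset R'" "\<forall>g\<in>set u. isgen d g" "\<forall>g\<in>set w. isgen d g"
  shows "eqM d r (act a (u @ R @ w)) (act a (u @ R' @ w))"
  using assms(3-5)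
proof (induction R arbitrary: u R')
  case Nil
  then show ?case by (simp add: eqM_refl)
next
  case (Cons x R)
  have "x \<in> set R'" using Cons.prems(2) by (metis list.set_intros(1) set_mset_mset)
  then obtain Ra Rb where R': "R' = Ra @ x # Rb" by (meson split_list)
  have "set R' \<subseteq> G" using Cons.prems by (metis set_mset_mset)
  have "eqM d r (act a (u @ x # R @ w)) (act a (u @ [x] @ Ra @ (Rb @ w)))"
    using Cons.prems G R' Cons.IH[where u="u @ [x]" and R'="Ra @ Rb"] by auto
  also have "eqM d r \<dots> (act a (u @ Ra @ [x] @ (Rb @ w)))"
    using \<open>set R' \<subseteq> G\<close> R' G Cons.prems assms(6) by (intro act_move_right) auto
  finally show ?case using R' by simp
qed

end

section \<open>Sums over permutations\<close>

lemma permutes_fixing_iff: "(\<sigma> permutes S \<and> \<sigma> m = m) \<longleftrightarrow> \<sigma> permutes (S - {m})"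
proof
  assume h: "\<sigma> permutes S \<and> \<sigma> m = m"
  show "\<sigma> permutes (S - {m})"
    by (rule permutes_superset[OF conjunct1[OF h]]) (use h in auto)
next
  assume h: "\<sigma> permutes (S - {m})"
  show "\<sigma> permutes S \<and> \<sigma> m = m"
    using permutes_subset[OF h, of S] permutes_not_in[OF h, of m] by auto
qed

lemma permutes_transpose_fixing:
  assumes "\<tau> permutes (S - {m})" "a \<in> S" "m \<in> S"
  shows "\<tau> \<circ> transpose a m permutes S"
  using permutes_compose[OF permutes_swap_id[OF assms(2,3)] permutes_subset[OF assms(1)]] by auto

lemma sign_transpose_compose:
  assumes "\<sigma> permutes S" "finite S" "a \<noteq> m"
  shows "sign (\<sigma> \<circ> transpose a m) = - sign \<sigma>"
proof -
  have "permutation \<sigma>" using assms(1,2) permutation_permutes by blast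
  then show ?thesis using assms(3) by (simp add: sign_compose[OF _ permutation_swap_id] sign_swap_id)
qed

text \<open>A permutation \<open>\<sigma>\<close> moving \<open>m\<close> is determined by \<open>a = \<sigma>\<inverse> m\<close> and the permutation
  \<open>\<sigma> \<circ> (a m)\<close> of \<open>S - {m}\<close>, which has the opposite sign.\<close>
lemma sum_permutes_moving:
  fixes F :: "('a \<Rightarrow> 'a) \<Rightarrow> 'b::comm_ring_1"
  assumes S: "finite S" and m: "m \<in> S"
  shows "(\<Sum>\<sigma> | \<sigma> permutes S \<and> \<sigma> m \<noteq> m. of_int (sign \<sigma>) * F (\<sigma> \<circ> transpose (inv \<sigma> m) m))
       = - of_nat (card S - 1) * (\<Sum>\<tau> | \<tau> permutes (S - {m}). of_int (sign \<tau>) * F \<tau>)"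
proof -
  let ?P' = "{\<tau>. \<tau> permutes (S - {m})}"
  have "(\<Sum>\<sigma> | \<sigma> permutes S \<and> \<sigma> m \<noteq> m. of_int (sign \<sigma>) * F (\<sigma> \<circ> transpose (inv \<sigma> m) m))
      = (\<Sum>(a, \<tau>)\<in>(S - {m}) \<times> ?P'. - (of_int (sign \<tau>) * F \<tau>))"
  proof (rule sum.reindex_bij_witness[where i="\<lambda>(a, \<tau>). \<tau> \<circ> transpose a m"
        and j="\<lambda>\<sigma>. (inv \<sigma> m, \<sigma> \<circ> transpose (inv \<sigma> m) m)"])
    fix \<sigma> assume "\<sigma> \<in> {\<sigma>. \<sigma> permutes S \<and> \<sigma> m \<noteq> m}"
    then have \<sigma>: "\<sigma> permutes S" and moved: "\<sigma> m \<noteq> m" by auto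
    define a where "a = inv \<sigma> m"
    have "\<sigma> a = m" unfolding a_def using permutes_inverses(1)[OF \<sigma>] by simp
    have "a \<in> S" unfolding a_def using permutes_in_image[OF permutes_inv[OF \<sigma>]] m by simp
    have "a \<noteq> m" using \<open>\<sigma> a = m\<close> moved by auto
    have "\<sigma> \<circ> transpose a m permutes S"
      using permutes_compose[OF permutes_swap_id[OF \<open>a \<in> S\<close> m] \<sigma>] by simp
    moreover have "(\<sigma> \<circ> transpose a m) m = m" using \<open>\<sigma> a = m\<close> by simp
    ultimately have "\<sigma> \<circ> transpose a m permutes (S - {m})"
      using permutes_fixing_iff[of "\<sigma> \<circ> transpose a m" S m] by blast
    then show "(inv \<sigma> m, \<sigma> \<circ> transpose (inv \<sigma> m) m) \<in> (S - {m}) \<times> ?P'"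
      using \<open>a \<in> S\<close> \<open>a \<noteq> m\<close> unfolding a_def by auto
    show "(case (inv \<sigma> m, \<sigma> \<circ> transpose (inv \<sigma> m) m) of (a, \<tau>) \<Rightarrow> \<tau> \<circ> transpose a m) = \<sigma>"
      by (simp add: o_assoc[symmetric])
    show "(case (inv \<sigma> m, \<sigma> \<circ> transpose (inv \<sigma> m) m) of (a, \<tau>) \<Rightarrow> - (of_int (sign \<tau>) * F \<tau>))
        = of_int (sign \<sigma>) * F (\<sigma> \<circ> transpose (inv \<sigma> m) m)"
      using sign_transpose_compose[OF \<sigma> S \<open>a \<noteq> m\<close>] unfolding a_def by simp
  next
    fix b assume "b \<in> (S - {m}) \<times> ?P'"
    then obtain a \<tau> where b: "b = (a, \<tau>)" and a: "a \<in> S" "a \<noteq> m" and \<tau>: "\<tau> permutes (S - {m})"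
      by auto
    have \<sigma>: "\<tau> \<circ> transpose a m permutes S" by (rule permutes_transpose_fixing[OF \<tau> a(1) m])
    have "\<tau> m = m" using permutes_not_in[OF \<tau>] by simp
    then have "inv (\<tau> \<circ> transpose a m) m = a" using permutes_inv_eq[OF \<sigma>] by simp
    then show "(case case b of (a, \<tau>) \<Rightarrow> \<tau> \<circ> transpose a m of
                \<sigma> \<Rightarrow> (inv \<sigma> m, \<sigma> \<circ> transpose (inv \<sigma> m) m)) = b"
      using b by (simp add: o_assoc[symmetric])
    have "\<tau> a \<in> S - {m}" using permutes_in_image[OF \<tau>] a by simp
    then show "(case b of (a, \<tau>) \<Rightarrow> \<tau> \<circ> transpose a m) \<in> {\<sigma>. \<sigma> permutes S \<and> \<sigma> m \<noteq> m}"
      using \<sigma> b by auto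
  qed
  also have "\<dots> = (\<Sum>a\<in>S - {m}. \<Sum>\<tau>\<in>?P'. - (of_int (sign \<tau>) * F \<tau>))"
    by (rule sum.cartesian_product[symmetric])
  also have "\<dots> = - of_nat (card S - 1) * (\<Sum>\<tau>\<in>?P'. of_int (sign \<tau>) * F \<tau>)"
    using S m by (simp add: sum_negf)
  finally show ?thesis .
qed

lemma sum_permutes_split_fixing:
  fixes F :: "('a \<Rightarrow> 'a) \<Rightarrow> 'b::comm_ring_1"
  assumes "finite S" "m \<in> S"
  shows "(\<Sum>\<sigma> | \<sigma> permutes S. of_int (sign \<sigma>) *
            (if \<sigma> m = m then c * F \<sigma> else c' * F (\<sigma> \<circ> transpose (inv \<sigma> m) m)))
       = (c - of_nat (card S - 1) * c') * (\<Sum>\<tau> | \<tau> permutes (S - {m}). of_int (sign \<tau>) * F \<tau>)"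
proof -
  let ?f = "\<lambda>\<sigma>. of_int (sign \<sigma>) * (if \<sigma> m = m then c * F \<sigma> else c' * F (\<sigma> \<circ> transpose (inv \<sigma> m) m))"
  have fin: "finite {\<sigma>. \<sigma> permutes S}" using assms(1) by (rule finite_permutations)
  have "sum ?f {\<sigma>. \<sigma> permutes S}
      = sum ?f ({\<sigma>. \<sigma> permutes S \<and> \<sigma> m = m} \<union> {\<sigma>. \<sigma> permutes S \<and> \<sigma> m \<noteq> m})"
    by (rule arg_cong[where f="sum ?f"]) auto
  also have "\<dots> = sum ?f {\<sigma>. \<sigma> permutes S \<and> \<sigma> m = m} + sum ?f {\<sigma>. \<sigma> permutes S \<and> \<sigma> m \<noteq> m}"
    by (rule sum.union_disjoint) (auto intro: rev_finite_subset[OF fin])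
  also have "sum ?f {\<sigma>. \<sigma> permutes S \<and> \<sigma> m = m}
      = c * (\<Sum>\<tau> | \<tau> permutes (S - {m}). of_int (sign \<tau>) * F \<tau>)"
  proof -
    have "{\<sigma>. \<sigma> permutes S \<and> \<sigma> m = m} = {\<tau>. \<tau> permutes (S - {m})}"
      by (simp only: permutes_fixing_iff)
    moreover have "?f \<tau> = c * (of_int (sign \<tau>) * F \<tau>)" if "\<tau> permutes (S - {m})" for \<tau>
      using permutes_not_in[OF that, of m] by simp
    ultimately show ?thesis by (simp add: sum_distrib_left)
  qed
  also have "sum ?f {\<sigma>. \<sigma> permutes S \<and> \<sigma> m \<noteq> m}
      = c' * (\<Sum>\<sigma> | \<sigma> permutes S \<and> \<sigma> m \<noteq> m. of_int (sign \<sigma>) * F (\<sigma> \<circ> transpose (inv \<sigma> m) m))"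
    by (auto simp: sum_distrib_left mult_ac intro!: sum.cong)
  finally show ?thesis using sum_permutes_moving[OF assms, of F] by (simp add: algebra_simps)
qed

section \<open>Moving \<open>v(m,m)\<close> through the determinant\<close>

definition perm_word :: "(nat \<Rightarrow> nat) \<Rightarrow> nat set \<Rightarrow> gen list" where
  "perm_word \<sigma> A = map (\<lambda>q. vneg q (\<sigma> q)) (sorted_list_of_set A)"

lemma set_perm_word: "finite A \<Longrightarrow> set (perm_word \<sigma> A) = (\<lambda>q. vneg q (\<sigma> q)) ` A"
  by (simp add: perm_word_def)

lemma perm_word_negs: "finite A \<Longrightarrow> A \<subseteq> B \<Longrightarrow> \<sigma> ` A \<subseteq> B \<Longrightarrow> set (perm_word \<sigma> A) \<subseteq> negs B"
  by (fastforce simp: set_perm_word negs_def)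

lemma perm_word_cong: "finite A \<Longrightarrow> (\<And>q. q \<in> A \<Longrightarrow> \<sigma> q = \<tau> q) \<Longrightarrow> perm_word \<sigma> A = perm_word \<tau> A"
  by (simp add: perm_word_def)

lemma mset_perm_word_insert:
  assumes "finite A" "q \<notin> A"
  shows "mset (perm_word \<sigma> (insert q A)) = add_mset (vneg q (\<sigma> q)) (mset (perm_word \<sigma> A))"
proof -
  have "mset (perm_word \<sigma> B) = image_mset (\<lambda>q. vneg q (\<sigma> q)) (mset_set B)" if "finite B" for B
    using that unfolding perm_word_def
    by (simp add: mset_map) (metis mset_sorted_list_of_multiset sorted_list_of_mset_set)
  then show ?thesis using assms by simp
qed

lemma perm_word_negs_permutes: "\<sigma> permutes A \<Longrightarrow> finite A \<Longrightarrow> set (perm_word \<sigma> A) \<subseteq> negs A"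
  by (rule perm_word_negs) (auto simp: permutes_image)

lemma perm_word_fixing_split:
  assumes \<sigma>: "\<sigma> permutes S" and S: "finite S" "m \<in> S" and fixed: "\<sigma> m = m"
  shows "mset (perm_word \<sigma> S) = mset (vneg m m # perm_word \<sigma> (S - {m}))"
    and "set (perm_word \<sigma> (S - {m})) \<subseteq> negs (S - {m})"
proof -
  have "mset (perm_word \<sigma> (insert m (S - {m}))) = mset (vneg m m # perm_word \<sigma> (S - {m}))"
    using S(1) fixed by (subst mset_perm_word_insert) auto
  then show "mset (perm_word \<sigma> S) = mset (vneg m m # perm_word \<sigma> (S - {m}))"
    using S(2) by (simp add: insert_absorb)
  have "\<sigma> permutes (S - {m})" using \<sigma> fixed permutes_fixing_iff[of \<sigma> S m] by blast
  then show "set (perm_word \<sigma> (S - {m})) \<subseteq> negs (S - {m})"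
    using S(1) by (intro perm_word_negs_permutes) auto
qed

lemma perm_word_moving_split:
  assumes \<sigma>: "\<sigma> permutes S" and S: "finite S" "m \<in> S" and moved: "\<sigma> m \<noteq> m"
  defines "a \<equiv> inv \<sigma> m" and "R \<equiv> perm_word \<sigma> (S - {m, inv \<sigma> m})"
  shows "mset (perm_word \<sigma> S) = mset (vneg m (\<sigma> m) # vneg a m # R)"
    and "mset (perm_word (\<sigma> \<circ> transpose a m) (S - {m})) = mset (vneg a (\<sigma> m) # R)"
    and "set R \<subseteq> negs (S - {m})"
    and "set (perm_word (\<sigma> \<circ> transpose a m) (S - {m})) \<subseteq> negs (S - {m})"
proof -
  have "\<sigma> a = m" unfolding a_def using permutes_inverses(1)[OF \<sigma>] by simp
  have "a \<in> S" unfolding a_def using permutes_in_image[OF permutes_inv[OF \<sigma>]] S(2) by simp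
  have "a \<noteq> m" using \<open>\<sigma> a = m\<close> moved by auto
  have R: "R = perm_word \<sigma> (S - {m, a})" unfolding R_def a_def ..
  have "mset (perm_word \<sigma> (insert m (insert a (S - {m, a})))) = mset (vneg m (\<sigma> m) # vneg a m # R)"
    unfolding R using S(1) \<open>a \<noteq> m\<close> \<open>\<sigma> a = m\<close> by (simp add: mset_perm_word_insert)
  moreover have "insert m (insert a (S - {m, a})) = S" using S(2) \<open>a \<in> S\<close> by auto
  ultimately show "mset (perm_word \<sigma> S) = mset (vneg m (\<sigma> m) # vneg a m # R)" by simp
  have "perm_word (\<sigma> \<circ> transpose a m) (S - {m, a}) = R"
    unfolding R using S(1) by (intro perm_word_cong) auto
  moreover have "insert a (S - {m, a}) = S - {m}" using \<open>a \<in> S\<close> \<open>a \<noteq> m\<close> by auto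
  ultimately show "mset (perm_word (\<sigma> \<circ> transpose a m) (S - {m})) = mset (vneg a (\<sigma> m) # R)"
    using mset_perm_word_insert[of "S - {m, a}" a "\<sigma> \<circ> transpose a m"] S(1) by simp
  have "\<sigma> ` (S - {m, a}) \<subseteq> S - {m}"
  proof
    fix y assume "y \<in> \<sigma> ` (S - {m, a})"
    then obtain q where q: "q \<in> S - {m, a}" "y = \<sigma> q" by blast
    then have "\<sigma> q \<noteq> \<sigma> a" using inj_eq[OF permutes_inj[OF \<sigma>]] by simp
    then show "y \<in> S - {m}" using q permutes_in_image[OF \<sigma>] \<open>\<sigma> a = m\<close> by simp
  qed
  then show "set R \<subseteq> negs (S - {m})" unfolding R using S(1) by (intro perm_word_negs) auto
  have "\<sigma> \<circ> transpose a m permutes S" "(\<sigma> \<circ> transpose a m) m = m"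
    using permutes_compose[OF permutes_swap_id[OF \<open>a \<in> S\<close> S(2)] \<sigma>] \<open>\<sigma> a = m\<close> by simp_all
  then have "\<sigma> \<circ> transpose a m permutes (S - {m})"
    using permutes_fixing_iff[of "\<sigma> \<circ> transpose a m" S m] by blast
  then show "set (perm_word (\<sigma> \<circ> transpose a m) (S - {m})) \<subseteq> negs (S - {m})"
    using S(1) by (intro perm_word_negs_permutes) auto
qed

context
  fixes d :: nat and r \<alpha> :: complex and a :: felt and m :: nat and S :: "nat set"
  assumes gen_poly: "gen_poly d a" and d: "d \<ge> 1"
    and S: "finite S" "0 \<notin> S" "m \<in> S"
    and annihilated: "\<forall>t\<in>S - {m}. eqM d r (fmul (wd [vmix t m]) a) (\<lambda>_. 0)"
    and eigen: "eqM d r (fmul (wd [vmix m m]) a) (\<lambda>x. \<alpha> * of_nat m * a x)"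
begin

lemma S_pos: "q \<in> S \<Longrightarrow> q \<ge> 1"
  using S(2) by (cases q) auto

lemma m_pos: "m \<ge> 1"
  using S_pos[OF S(3)] .

lemma isgen_negs_list: "set R \<subseteq> negs A \<Longrightarrow> \<forall>g\<in>set R. isgen d g"
  using d isgen_negs by blast

lemma mem_negs_punctured:
  "g \<in> negs (S - {m}) \<Longrightarrow> \<exists>s t. g = vneg s t \<and> s \<ge> 1 \<and> t \<ge> 1 \<and> s \<noteq> m \<and> t \<noteq> m"
  unfolding negs_def using S_pos by blast

lemma act_vpos_move_right:
  assumes "set R \<subseteq> negs (S - {m})" "\<forall>g\<in>set u. isgen d g" "\<forall>g\<in>set w. isgen d g"
  shows "eqM d r (act a (u @ [vpos m] @ R @ w)) (act a (u @ R @ [vpos m] @ w))"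
  using assms d mem_negs_punctured
  by (intro act_move_right[OF gen_poly]) (fastforce simp: isgen_vpos isgen_negs brr_vpos_vneg)+

lemma act_vmix_move_right:
  assumes "k \<ge> 1" "set R \<subseteq> negs (S - {m})" "\<forall>g\<in>set u. isgen d g" "\<forall>g\<in>set w. isgen d g"
  shows "eqM d r (act a (u @ [vmix k m] @ R @ w)) (act a (u @ R @ [vmix k m] @ w))"
  using assms d mem_negs_punctured
  by (intro act_move_right[OF gen_poly]) (fastforce simp: isgen_vmix isgen_negs brr_vmix_vneg)+

lemma act_vmix_annihilated:
  assumes "t \<in> S - {m}" "set R \<subseteq> negs (S - {m})" "\<forall>g\<in>set u. isgen d g"
  shows "eqM d r (act a (u @ vmix t m # R)) (\<lambda>_. 0)"
proof -
  have "t \<ge> 1" using assms(1) S_pos by blast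
  have "eqM d r (act a (u @ [vmix t m] @ R @ [])) (act a (u @ R @ [vmix t m] @ []))"
    using act_vmix_move_right[OF \<open>t \<ge> 1\<close> assms(2,3), where w="[]"] by simp
  also have "eqM d r \<dots> (\<lambda>_. 0)"
    using eqM_fmul_wd_left[OF bspec[OF annihilated assms(1)], of "u @ R"]
      isgen_negs_list[OF assms(2)] assms(3)
    by (auto simp: fmul_wd_fmul_wd fmul_zero_right)
  finally show ?thesis by simp
qed

lemma act_vmix_eigen:
  assumes "set R \<subseteq> negs (S - {m})"
  shows "eqM d r (act a (vmix m m # R)) (\<lambda>x. \<alpha> * of_nat m * act a R x)"
proof -
  have "eqM d r (act a ([] @ [vmix m m] @ R @ [])) (act a ([] @ R @ [vmix m m] @ []))"
    using act_vmix_move_right[OF m_pos assms, where u="[]" and w="[]"] by simp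
  also have "eqM d r \<dots> (\<lambda>x. \<alpha> * of_nat m * act a R x)"
    using eqM_fmul_wd_left[OF eigen, of R] isgen_negs_list[OF assms]
    by (simp add: fmul_wd_fmul_wd fmul_smult_right)
  finally show ?thesis by simp
qed

lemma act_vpos_vneg_diag:
  assumes R: "set R \<subseteq> negs (S - {m})"
  shows "eqM d r (act a (vpos m # vneg m m # R))
     (\<lambda>x. act a (vneg m m # R @ [vpos m]) x + (2 * of_nat m ^ 2 * (2 * \<alpha> + r)) * act a R x)"
proof -
  have gens: "\<forall>g\<in>set R. isgen d g" using isgen_negs_list[OF R] .
  have "eqM d r (act a ([] @ [vpos m, vneg m m] @ R))
     (\<lambda>x. act a ([] @ [vneg m m, vpos m] @ R) x + ((4 * of_nat m) * act a ([] @ [vmix m m] @ R) x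
          + (2 * r * of_nat m ^ 2) * act a ([] @ [None] @ R) x))"
    using d m_pos gens by (intro act_swap_pair[OF gen_poly]) (auto simp: isgen_vpos isgen_vneg brr_vpos_vneg_diag)
  also have "eqM d r \<dots> (\<lambda>x. act a (vneg m m # R @ [vpos m]) x
      + ((4 * of_nat m) * (\<alpha> * of_nat m * act a R x) + (2 * r * of_nat m ^ 2) * act a R x))"
  proof (intro eqM_add eqM_smult)
    show "eqM d r (act a ([] @ [vneg m m, vpos m] @ R)) (act a (vneg m m # R @ [vpos m]))"
      using act_vpos_move_right[OF R, of "[vneg m m]" "[]"] d by (simp add: isgen_vneg)
    show "eqM d r (act a ([] @ [vmix m m] @ R)) (\<lambda>x. \<alpha> * of_nat m * act a R x)"
      using act_vmix_eigen[OF R] by simp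
    show "eqM d r (act a ([] @ [None] @ R)) (act a R)"
      using eqM_drop_None[OF gen_poly, of "[]" R] gens by simp
  qed
  also have "\<dots> = (\<lambda>x. act a (vneg m m # R @ [vpos m]) x + (2 * of_nat m ^ 2 * (2 * \<alpha> + r)) * act a R x)"
    by (simp add: fun_eq_iff algebra_simps power2_eq_square)
  finally show ?thesis by simp
qed

lemma act_swap_vpos_vneg:
  assumes "b \<in> S - {m}" "\<forall>g\<in>set u. isgen d g" "\<forall>g\<in>set w. isgen d g"
  shows "eqM d r (act a (u @ [vpos m, vneg m b] @ w))
     (\<lambda>x. act a (u @ [vneg m b, vpos m] @ w) x + (2 * of_nat m) * act a (u @ [vmix b m] @ w) x)"
proof -
  have "b \<ge> 1" using assms(1) S_pos by blast
  then show ?thesis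
    using assms d m_pos
    by (intro act_swap_single[OF gen_poly]) (auto simp: isgen_vpos isgen_vneg brr_vpos_vneg_offdiag)
qed

lemma act_vmix_vneg_offdiag:
  assumes R: "set R \<subseteq> negs (S - {m})" and ab: "a' \<in> S - {m}" "b \<in> S - {m}"
  shows "eqM d r (act a (vmix b m # vneg a' m # R)) (\<lambda>x. of_nat m * act a (vneg a' b # R) x)"
proof -
  have "a' \<ge> 1" "b \<ge> 1" using ab S_pos by blast+
  then have "eqM d r (act a ([] @ [vmix b m, vneg a' m] @ R))
     (\<lambda>x. act a ([] @ [vneg a' m, vmix b m] @ R) x + of_nat m * act a ([] @ [vneg a' b] @ R) x)"
    using d m_pos isgen_negs_list[OF R] ab
    by (intro act_swap_single[OF gen_poly]) (auto simp: isgen_vmix isgen_vneg brr_vmix_vneg_offdiag)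
  also have "eqM d r \<dots> (\<lambda>x. 0 + of_nat m * act a (vneg a' b # R) x)"
    using act_vmix_annihilated[OF ab(2) R, of "[vneg a' m]"] d
    by (intro eqM_add eqM_smult) (simp_all add: isgen_vneg eqM_refl)
  finally show ?thesis by simp
qed

text \<open>The commutator with \<open>v(-m,-b)\<close> yields \<open>v(-b,m)\<close>, which turns \<open>v(-a',-m)\<close> into
  \<open>m v(-a',-b)\<close>; the commutator with \<open>v(-a',-m)\<close> yields \<open>v(-a',m)\<close>, which kills \<open>u\<close>.\<close>
lemma act_vpos_vneg_offdiag:
  assumes R: "set R \<subseteq> negs (S - {m})" and ab: "a' \<in> S - {m}" "b \<in> S - {m}"
  shows "eqM d r (act a (vpos m # vneg m b # vneg a' m # R))
     (\<lambda>x. act a (vneg m b # vneg a' m # R @ [vpos m]) x + (2 * of_nat m ^ 2) * act a (vneg a' b # R) x)"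
proof -
  have gens: "\<forall>g\<in>set (vneg a' m # R). isgen d g" using isgen_negs_list[OF R] d by (simp add: isgen_vneg)
  have "eqM d r (act a ([] @ [vpos m, vneg m b] @ (vneg a' m # R)))
     (\<lambda>x. act a ([] @ [vneg m b, vpos m] @ (vneg a' m # R)) x
          + (2 * of_nat m) * act a ([] @ [vmix b m] @ (vneg a' m # R)) x)"
    using act_swap_vpos_vneg[OF ab(2) _ gens, of "[]"] by simp
  also have "eqM d r \<dots> (\<lambda>x. (act a (vneg m b # vneg a' m # R @ [vpos m]) x + (2 * of_nat m) * 0)
       + (2 * of_nat m) * (of_nat m * act a (vneg a' b # R) x))"
  proof (intro eqM_add eqM_smult)
    have "eqM d r (act a ([vneg m b] @ [vpos m, vneg m a'] @ R))
       (\<lambda>x. act a ([vneg m b] @ [vneg m a', vpos m] @ R) x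
            + (2 * of_nat m) * act a ([vneg m b] @ [vmix a' m] @ R) x)"
      using act_swap_vpos_vneg[OF ab(1), of "[vneg m b]" R] isgen_negs_list[OF R] d by (simp add: isgen_vneg)
    also have "eqM d r \<dots> (\<lambda>x. act a (vneg m b # vneg a' m # R @ [vpos m]) x + (2 * of_nat m) * 0)"
      using act_vpos_move_right[OF R, of "[vneg m b, vneg a' m]" "[]"]
        act_vmix_annihilated[OF ab(1) R, of "[vneg m b]"] d
      by (intro eqM_add eqM_smult) (simp_all add: isgen_vneg vneg_commute[of a' m])
    finally show "eqM d r (act a ([] @ [vneg m b, vpos m] @ vneg a' m # R))
       (\<lambda>x. act a (vneg m b # vneg a' m # R @ [vpos m]) x + (2 * of_nat m) * 0)"
      by (simp add: vneg_commute[of a' m])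
    show "eqM d r (act a ([] @ [vmix b m] @ vneg a' m # R)) (\<lambda>x. of_nat m * act a (vneg a' b # R) x)"
      using act_vmix_vneg_offdiag[OF R ab] by simp
  qed
  also have "\<dots> = (\<lambda>x. act a (vneg m b # vneg a' m # R @ [vpos m]) x
      + (2 * of_nat m ^ 2) * act a (vneg a' b # R) x)"
    by (simp add: fun_eq_iff algebra_simps power2_eq_square)
  finally show ?thesis by simp
qed

lemma act_reorder_negs:
  assumes "set R \<subseteq> negs S" "mset R = mset R'" "\<forall>g\<in>set u. isgen d g" "\<forall>g\<in>set w. isgen d g"
  shows "eqM d r (act a (u @ R @ w)) (act a (u @ R' @ w))"
  using assms isgen_negs[OF d] brr_negs[OF S(2)] by (intro act_reorder[OF gen_poly, of "negs S"]) auto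

lemma act_vpos_reorder:
  assumes "set W \<subseteq> negs S" "mset W = mset W'"
    and "eqM d r (act a (vpos m # W')) (\<lambda>x. act a (W' @ [vpos m]) x + c * act a V x)"
  shows "eqM d r (act a (vpos m # W)) (\<lambda>x. act a (W @ [vpos m]) x + c * act a V x)"
proof -
  have "eqM d r (act a ([vpos m] @ W @ [])) (act a ([vpos m] @ W' @ []))"
    using act_reorder_negs[OF assms(1,2), of "[vpos m]" "[]"] d by (simp add: isgen_vpos)
  also have "eqM d r \<dots> (\<lambda>x. act a (W' @ [vpos m]) x + c * act a V x)"
    using assms(3) by simp
  also have "eqM d r \<dots> (\<lambda>x. act a (W @ [vpos m]) x + c * act a V x)"
    using act_reorder_negs[OF _ assms(2)[symmetric], of "[]" "[vpos m]"] assms(1) mset_eq_setD[OF assms(2)] d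
    by (intro eqM_add eqM_refl) (simp add: isgen_vpos)
  finally show ?thesis by simp
qed

lemma act_vpos_perm_word_fixing:
  assumes \<sigma>: "\<sigma> permutes S" and fixed: "\<sigma> m = m"
  shows "eqM d r (act a (vpos m # perm_word \<sigma> S))
     (\<lambda>x. act a (perm_word \<sigma> S @ [vpos m]) x
          + (2 * of_nat m ^ 2 * (2 * \<alpha> + r)) * act a (perm_word \<sigma> (S - {m})) x)"
proof -
  note split = perm_word_fixing_split[OF \<sigma> S(1) S(3) fixed]
  have "eqM d r (act a (vpos m # (vneg m m # perm_word \<sigma> (S - {m}))))
      (\<lambda>x. act a ((vneg m m # perm_word \<sigma> (S - {m})) @ [vpos m]) x
          + (2 * of_nat m ^ 2 * (2 * \<alpha> + r)) * act a (perm_word \<sigma> (S - {m})) x)"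
    using act_vpos_vneg_diag[OF split(2)] by simp
  then show ?thesis
    by (rule act_vpos_reorder[OF perm_word_negs_permutes[OF \<sigma> S(1)] split(1)])
qed

lemma act_vpos_perm_word_moving:
  assumes \<sigma>: "\<sigma> permutes S" and moved: "\<sigma> m \<noteq> m"
  shows "eqM d r (act a (vpos m # perm_word \<sigma> S))
     (\<lambda>x. act a (perm_word \<sigma> S @ [vpos m]) x
          + (2 * of_nat m ^ 2) * act a (perm_word (\<sigma> \<circ> transpose (inv \<sigma> m) m) (S - {m})) x)"
proof -
  define a' where "a' = inv \<sigma> m"
  define R where "R = perm_word \<sigma> (S - {m, a'})"
  define \<tau> where "\<tau> = \<sigma> \<circ> transpose a' m"
  note split = perm_word_moving_split[OF \<sigma> S(1) S(3) moved, folded a'_def, folded R_def \<tau>_def]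
  have "\<sigma> a' = m" unfolding a'_def using permutes_inverses(1)[OF \<sigma>] by simp
  then have "a' \<in> S - {m}"
    unfolding a'_def using permutes_in_image[OF permutes_inv[OF \<sigma>]] S(3) moved by auto
  have "\<sigma> m \<in> S - {m}" using permutes_in_image[OF \<sigma>] S(3) moved by simp
  have "eqM d r (act a (vpos m # (vneg m (\<sigma> m) # vneg a' m # R)))
      (\<lambda>x. act a ((vneg m (\<sigma> m) # vneg a' m # R) @ [vpos m]) x
          + (2 * of_nat m ^ 2) * act a (vneg a' (\<sigma> m) # R) x)"
    using act_vpos_vneg_offdiag[OF split(3) \<open>a' \<in> S - {m}\<close> \<open>\<sigma> m \<in> S - {m}\<close>] by simp
  then have "eqM d r (act a (vpos m # perm_word \<sigma> S))
      (\<lambda>x. act a (perm_word \<sigma> S @ [vpos m]) x + (2 * of_nat m ^ 2) * act a (vneg a' (\<sigma> m) # R) x)"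
    by (rule act_vpos_reorder[OF perm_word_negs_permutes[OF \<sigma> S(1)] split(1)])
  also have "eqM d r \<dots> (\<lambda>x. act a (perm_word \<sigma> S @ [vpos m]) x
      + (2 * of_nat m ^ 2) * act a (perm_word \<tau> (S - {m})) x)"
    using act_reorder_negs[OF _ split(2)[symmetric], of "[]" "[]"] split(4) mset_eq_setD[OF split(2)]
      negs_mono[of "S - {m}" S]
    by (intro eqM_add eqM_smult eqM_refl) auto
  finally show ?thesis unfolding \<tau>_def a'_def .
qed

lemma act_vpos_det:
  "eqM d r (\<lambda>x. \<Sum>\<sigma> | \<sigma> permutes S. of_int (sign \<sigma>) * act a (vpos m # perm_word \<sigma> S) x)
     (\<lambda>x. (2 * of_nat m ^ 2 * (2 * \<alpha> + r) - of_nat (card S - 1) * (2 * of_nat m ^ 2))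
            * (\<Sum>\<tau> | \<tau> permutes (S - {m}). of_int (sign \<tau>) * act a (perm_word \<tau> (S - {m})) x)
          + (\<Sum>\<sigma> | \<sigma> permutes S. of_int (sign \<sigma>) * act a (perm_word \<sigma> S @ [vpos m]) x))"
proof -
  define c :: complex where "c = 2 * of_nat m ^ 2 * (2 * \<alpha> + r)"
  define c' :: complex where "c' = 2 * of_nat m ^ 2"
  define F where "F = (\<lambda>x \<tau>. act a (perm_word \<tau> (S - {m})) x)"
  have "eqM d r (\<lambda>x. \<Sum>\<sigma> | \<sigma> permutes S. of_int (sign \<sigma>) * act a (vpos m # perm_word \<sigma> S) x)
     (\<lambda>x. \<Sum>\<sigma> | \<sigma> permutes S. of_int (sign \<sigma>) * (\<lambda>x. act a (perm_word \<sigma> S @ [vpos m]) x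
        + (if \<sigma> m = m then c * F x \<sigma> else c' * F x (\<sigma> \<circ> transpose (inv \<sigma> m) m))) x)"
  proof (rule eqM_sum)
    show "finite {\<sigma>. \<sigma> permutes S}" using S(1) by (rule finite_permutations)
  next
    fix \<sigma> assume "\<sigma> \<in> {\<sigma>. \<sigma> permutes S}"
    then show "eqM d r (act a (vpos m # perm_word \<sigma> S)) (\<lambda>x. act a (perm_word \<sigma> S @ [vpos m]) x
        + (if \<sigma> m = m then c * F x \<sigma> else c' * F x (\<sigma> \<circ> transpose (inv \<sigma> m) m)))"
      using act_vpos_perm_word_fixing[of \<sigma>] act_vpos_perm_word_moving[of \<sigma>]
      unfolding c_def c'_def F_def by (cases "\<sigma> m = m") auto
  qed
  also have "(\<lambda>x. \<Sum>\<sigma> | \<sigma> permutes S. of_int (sign \<sigma>) * (\<lambda>x. act a (perm_word \<sigma> S @ [vpos m]) x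
        + (if \<sigma> m = m then c * F x \<sigma> else c' * F x (\<sigma> \<circ> transpose (inv \<sigma> m) m))) x)
    = (\<lambda>x. (c - of_nat (card S - 1) * c') * (\<Sum>\<tau> | \<tau> permutes (S - {m}). of_int (sign \<tau>) * F x \<tau>)
          + (\<Sum>\<sigma> | \<sigma> permutes S. of_int (sign \<sigma>) * act a (perm_word \<sigma> S @ [vpos m]) x))"
    by (simp add: fun_eq_iff distrib_left sum.distrib sum_permutes_split_fixing[OF S(1) S(3)] add.commute)
  finally show ?thesis unfolding c_def c'_def F_def .
qed

end

lemma vF_vpos: "vF (int m) (int m) = wd [vpos m]"
  by (simp add: vF_def vel_def liftL_single vpos_def)

lemma vF_vmix: "vF (- int t) (int m) = wd [vmix t m]"
  by (simp add: vF_def vel_def liftL_single vmix_def)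

lemma vF_vneg: "q \<ge> 1 \<Longrightarrow> vF (- int q) (- int t) = wd [vneg q t]"
  by (auto simp: vF_def vel_def liftL_single vneg_def max_def min_def)

lemma prodF_map_wd: "prodF (map (\<lambda>q. wd [g q]) xs) = wd (map g xs)"
  by (induction xs) (auto simp: prodF_def fmul_wd_wd)

lemma detS_perm_words:
  assumes "finite A" "0 \<notin> A"
  shows "detS A = (\<lambda>x. \<Sum>\<sigma> | \<sigma> permutes A. of_int (sign \<sigma>) * wd (perm_word \<sigma> A) x)"
proof -
  have "prodF (map (\<lambda>q. vF (- int q) (- int (\<sigma> q))) (sorted_list_of_set A)) = wd (perm_word \<sigma> A)" for \<sigma>
  proof -
    have "map (\<lambda>q. vF (- int q) (- int (\<sigma> q))) (sorted_list_of_set A)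
        = map (\<lambda>q. wd [vneg q (\<sigma> q)]) (sorted_list_of_set A)"
      using assms by (intro map_cong refl vF_vneg) (auto simp: Suc_le_eq intro: gr0I)
    then show ?thesis unfolding perm_word_def by (simp only: prodF_map_wd)
  qed
  then show ?thesis unfolding detS_def by simp
qed

lemma gen_poly_A1: "d \<ge> 1 \<Longrightarrow> a \<in> A1 \<Longrightarrow> gen_poly d a"
  unfolding A1_def gen_poly_def by (fastforce simp: isgen_def)

theorem lemma6p3:
  fixes d p m :: nat and r \<alpha> :: complex and a :: felt
  assumes "d \<ge> 2" and "p \<ge> 1" and "1 \<le> m" and "m \<le> p"
    and "a \<in> A1"
    and "\<forall>t\<in>{1..p}. t \<noteq> m \<longrightarrow> eqM d r (fmul (vF (- int t) (int m)) a) (\<lambda>_. 0)"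
    and "eqM d r (fmul (vF (- int m) (int m)) a) (\<lambda>x. \<alpha> * of_nat m * a x)"
  shows "eqM d r (fmul (vF (int m) (int m)) (fmul (detS {1..p}) a))
           (\<lambda>x. 2 * of_nat m ^ 2 * (2 * \<alpha> + r - of_nat p + 1) * fmul (detS ({1..p} - {m})) a x
                + fmul (detS {1..p}) (fmul (vF (int m) (int m)) a) x)"
proof -
  have d: "d \<ge> 1" using assms(1) by simp
  have "m \<in> {1..p}" using assms(3,4) by simp
  have annihilated: "\<forall>t\<in>{1..p} - {m}. eqM d r (fmul (wd [vmix t m]) a) (\<lambda>_. 0)"
    and eigen: "eqM d r (fmul (wd [vmix m m]) a) (\<lambda>x. \<alpha> * of_nat m * a x)"
    using assms(6,7) by (simp_all add: vF_vmix)
  have "2 * of_nat m ^ 2 * (2 * \<alpha> + r) - of_nat (card {1..p} - 1) * (2 * of_nat m ^ 2)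
      = 2 * of_nat m ^ 2 * (2 * \<alpha> + r - of_nat p + 1)"
    using assms(2) by (simp add: of_nat_diff algebra_simps)
  then show ?thesis
    using act_vpos_det[OF gen_poly_A1[OF d assms(5)] d _ _ \<open>m \<in> {1..p}\<close> annihilated eigen]
    by (simp add: vF_vpos detS_perm_words fmul_sum_left fmul_sum_right fmul_wd_fmul_wd)
qed

end
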